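(* Let $\mathbf{s}$ be a linearly recurrent sequence over $\{0,1\}$. Then for every integer $k\ge1$, $C_{2k}(\mathbf{s},N)\gg N$, i.e., there is a constant $c>0$ (depending on $\mathbf{s}$ and $k$) such that $C_{2k}(\mathbf{s},N)\ge cN$ for all sufficiently large $N$.
   Context: A sequence $\mathbf{s}$ is linearly recurrent if there is a constant $C>0$ such that every factor (finite block) of $\mathbf{s}$ occurs infinitely often and the distance between two consecutive occurrences of any length-$n$ factor of $\mathbf{s}$ is at most $Cn$. Correlation measure: for $\mathbf{s}$ over $\{0,1\}$, an integer $k\ge1$, $D=(d_1,\dots,d_k)\in\mathbb{N}^k$ with $0\le d_1<\cdots<d_k$ and $M\in\mathbb{N}$, put $V(\mathbf{s},M,D)=\sum_{n=0}^{M-1}(-1)^{\mathbf{s}(n+d_1)+\cdots+\mathbf{s}(n+d_k)}$, and $C_k(\mathbf{s},N)=\max_{M,D}|V(\mathbf{s},M,D)|$ over all such $D$ and integers $M$ with $M+d_k\le N$. *)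

theory Defs
  imports Complex_Main
begin

definition factor :: "(nat \<Rightarrow> nat) \<Rightarrow> nat \<Rightarrow> nat \<Rightarrow> nat list" where
  "factor s i n = map (\<lambda>j. s (i + j)) [0..<n]"

definition linearly_recurrent :: "(nat \<Rightarrow> nat) \<Rightarrow> bool" where
  "linearly_recurrent s \<longleftrightarrow>
     (\<exists>C::real. C > 0 \<and>
        (\<forall>i n. infinite {j. factor s j n = factor s i n}) \<and>
        (\<forall>n i j. n \<ge> 1 \<and> i < j \<and> factor s j n = factor s i n \<and>
                 (\<forall>l. i < l \<and> l < j \<longrightarrow> factor s l n \<noteq> factor s i n)
                 \<longrightarrow> real (j - i) \<le> C * real n))"

definition corrV :: "(nat \<Rightarrow> nat) \<Rightarrow> nat \<Rightarrow> nat list \<Rightarrow> int" where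
  "corrV s M D = (\<Sum>n<M. (-1::int) ^ (\<Sum>d\<leftarrow>D. s (n + d)))"

text \<open>C_k(s,N): maximum of |V(s,M,D)| over strictly increasing D of length k
  and M with M + d_k \<le> N (0 added so the max is over a nonempty set; harmless
  since all values are \<ge> 0).\<close>
definition corr_measure :: "nat \<Rightarrow> (nat \<Rightarrow> nat) \<Rightarrow> nat \<Rightarrow> int" where
  "corr_measure k s N = Max ({\<bar>corrV s M D\<bar> | M D.
       length D = k \<and> sorted_wrt (<) D \<and> M + last D \<le> N} \<union> {0})"

end

theory Submission
  imports Defs
begin

text \<open>By linear recurrence, the prefix of length m of s returns within distance p \<le> K m,
  so s is p-periodic on [0, m + p). Take a multiple t \<ge> k of p with t \<le> k p and
  D = {0, \<dots>, k-1} \<union> {t, \<dots>, t+k-1}: for all n up to about m the two halves of D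
  carry the same values, so every summand of V(s, M, D) is (-1)^(even) = 1 and
  V(s, M, D) = M \<approx> m. Choosing m proportional to N gives C_2k(s, N) \<ge> c N.\<close>

lemma periodic_window_mult:
  fixes s :: "nat \<Rightarrow> nat"
  assumes "\<forall>x<m. s (x + p) = s x" and "x + r * p < m + p"
  shows "s (x + r * p) = s x"
  using assms(2)
proof (induction r)
  case 0
  show ?case by simp
next
  case (Suc r)
  then have "x + r * p < m" by simp
  have shift: "x + Suc r * p = (x + r * p) + p" by simp
  have "s (x + Suc r * p) = s (x + r * p)"
    unfolding shift using assms(1) \<open>x + r * p < m\<close> by blast
  also have "\<dots> = s x" using Suc by simp
  finally show ?case .
qed

lemma periodic_window_shift_ge:
  fixes s :: "nat \<Rightarrow> nat"
  assumes "\<forall>x<m. s (x + p) = s x" and "0 < p" and "1 \<le> k"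
  obtains t where "k \<le> t" "t \<le> k * p" "\<forall>x. x + k * k < m \<longrightarrow> s (x + t) = s x"
proof (cases "p < k")
  case True
  have "s (x + k * p) = s x" if "x + k * k < m" for x
  proof (rule periodic_window_mult[OF assms(1)])
    have "k * p \<le> k * k" using True by simp
    then show "x + k * p < m + p" using that by linarith
  qed
  moreover have "k \<le> k * p" using assms(2) by simp
  ultimately show ?thesis using that by blast
next
  case False
  have "s (x + p) = s x" if "x + k * k < m" for x
    using assms(1) that by simp
  moreover have "p \<le> k * p" using assms(3) by simp
  ultimately show ?thesis using that False by (meson not_less)
qed

lemma corrV_abs_le: "\<bar>corrV s M D\<bar> \<le> int M"
proof -
  have "\<bar>corrV s M D\<bar> \<le> (\<Sum>n<M. \<bar>(-1::int) ^ (\<Sum>d\<leftarrow>D. s (n + d))\<bar>)"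
    unfolding corrV_def by (rule sum_abs)
  also have "\<dots> = int M" by simp
  finally show ?thesis .
qed

lemma finite_corr_values:
  "finite ({\<bar>corrV s M D\<bar> | M D. length D = k \<and> sorted_wrt (<) D \<and> M + last D \<le> N} \<union> {0})"
proof (rule finite_subset[of _ "{0..int N}"])
  show "{\<bar>corrV s M D\<bar> | M D. length D = k \<and> sorted_wrt (<) D \<and> M + last D \<le> N} \<union> {0}
      \<subseteq> {0..int N}"
  proof (intro Un_least subsetI)
    fix x assume "x \<in> {\<bar>corrV s M D\<bar> | M D. length D = k \<and> sorted_wrt (<) D \<and> M + last D \<le> N}"
    then obtain M D where "x = \<bar>corrV s M D\<bar>" "M \<le> N" by auto
    then show "x \<in> {0..int N}" using corrV_abs_le[of s M D] by auto
  qed simp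
qed simp

lemma corr_measure_nonneg: "0 \<le> corr_measure k s N"
  unfolding corr_measure_def by (rule Max_ge[OF finite_corr_values]) simp

lemma corrV_le_corr_measure:
  assumes "length D = k" "sorted_wrt (<) D" "M + last D \<le> N"
  shows "\<bar>corrV s M D\<bar> \<le> corr_measure k s N"
proof -
  have "\<bar>corrV s M D\<bar> \<in>
      {\<bar>corrV s M D\<bar> | M D. length D = k \<and> sorted_wrt (<) D \<and> M + last D \<le> N} \<union> {0}"
    using assms by blast
  then show ?thesis unfolding corr_measure_def by (rule Max_ge[OF finite_corr_values])
qed

lemma corrV_append_shift:
  assumes "\<forall>n<M. \<forall>d\<in>set D. s (n + (d + t)) = s (n + d)"
  shows "corrV s M (D @ map (\<lambda>d. d + t) D) = int M"
proof -
  have "(\<Sum>d\<leftarrow>D @ map (\<lambda>d. d + t) D. s (n + d)) = 2 * (\<Sum>d\<leftarrow>D. s (n + d))"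
    if "n < M" for n
  proof -
    have "(\<Sum>d\<leftarrow>D. s (n + (d + t))) = (\<Sum>d\<leftarrow>D. s (n + d))"
      using assms that by (intro arg_cong[where f = sum_list] map_cong) auto
    then show ?thesis by (simp add: comp_def)
  qed
  then show ?thesis unfolding corrV_def by simp
qed

lemma corr_measure_ge_periodic_prefix:
  fixes s :: "nat \<Rightarrow> nat"
  assumes "\<forall>x<m. s (x + p) = s x" and "0 < p" and "1 \<le> k" and "k \<le> m" and "m + k * p \<le> N"
  shows "int (m - (k * k + k)) \<le> corr_measure (2 * k) s N"
proof -
  obtain t where t: "k \<le> t" "t \<le> k * p" "\<forall>x. x + k * k < m \<longrightarrow> s (x + t) = s x"
    using periodic_window_shift_ge[OF assms(1-3)] by blast
  define M where "M = m - (k * k + k)"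
  define D where "D = [0..<k] @ map (\<lambda>d. d + t) [0..<k]"
  have "length D = 2 * k" unfolding D_def by simp
  moreover have "sorted_wrt (<) D"
    unfolding D_def using t(1) by (auto simp: sorted_wrt_append sorted_wrt_map)
  moreover have "M + last D \<le> N"
    unfolding D_def M_def using assms(3-5) t(2) by (simp add: last_map)
  ultimately have "\<bar>corrV s M D\<bar> \<le> corr_measure (2 * k) s N"
    by (rule corrV_le_corr_measure)
  moreover have "corrV s M D = int M"
    unfolding D_def
  proof (rule corrV_append_shift, intro allI impI ballI)
    fix n d assume "n < M" "d \<in> set [0..<k]"
    then have "n + d + k * k < m" unfolding M_def by auto
    then show "s (n + (d + t)) = s (n + d)"
      using t(3)[rule_format, of "n + d"] by (simp only: add.assoc)
  qed
  ultimately show ?thesis unfolding M_def by simp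
qed

lemma linearly_recurrent_prefix_return:
  assumes "linearly_recurrent s"
  obtains K :: nat where "\<forall>m\<ge>1. \<exists>p. 0 < p \<and> p \<le> K * m \<and> (\<forall>x<m. s (x + p) = s x)"
proof -
  obtain C :: real where
        inf: "\<forall>i n. infinite {j. factor s j n = factor s i n}"
    and rec: "\<forall>n i j. n \<ge> 1 \<and> i < j \<and> factor s j n = factor s i n \<and>
                 (\<forall>l. i < l \<and> l < j \<longrightarrow> factor s l n \<noteq> factor s i n)
                 \<longrightarrow> real (j - i) \<le> C * real n"
    using assms unfolding linearly_recurrent_def by blast
  define K where "K = nat \<lceil>C\<rceil>"
  have "\<exists>p. 0 < p \<and> p \<le> K * m \<and> (\<forall>x<m. s (x + p) = s x)" if "m \<ge> 1" for m
  proof -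
    let ?P = "\<lambda>j. 0 < j \<and> factor s j m = factor s 0 m"
    have "\<not> {j. factor s j m = factor s 0 m} \<subseteq> {0}"
      using inf finite_subset by blast
    then obtain j where "factor s j m = factor s 0 m" "j \<noteq> 0" by blast
    then have "\<exists>j. ?P j" by blast
    define p where "p = (LEAST j. ?P j)"
    have "?P p"
      unfolding p_def using \<open>\<exists>j. ?P j\<close> by (rule LeastI_ex)
    then have p: "0 < p" "factor s p m = factor s 0 m" by simp_all
    have "\<forall>l. 0 < l \<and> l < p \<longrightarrow> factor s l m \<noteq> factor s 0 m"
      using not_less_Least unfolding p_def by blast
    then have "real p \<le> C * real m"
      using rec[rule_format, of m 0 p] that p by simp
    also have "\<dots> \<le> real K * real m"
      unfolding K_def by (intro mult_right_mono) linarith+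
    finally have "p \<le> K * m" by (simp only: of_nat_mult[symmetric] of_nat_le_iff)
    moreover have "s (x + p) = s x" if "x < m" for x
    proof -
      have "factor s p m ! x = factor s 0 m ! x" using p(2) by simp
      then show ?thesis using that unfolding factor_def by (simp add: add.commute)
    qed
    ultimately show ?thesis using p(1) by blast
  qed
  then show ?thesis using that by blast
qed

lemma linearly_recurrent_corr_measure_ge:
  assumes "linearly_recurrent s" and "1 \<le> k"
  obtains Q :: nat where "1 \<le> Q" "\<forall>N. int (N div Q - (k * k + k)) \<le> corr_measure (2 * k) s N"
proof -
  obtain K where K: "\<forall>m\<ge>1. \<exists>p. 0 < p \<and> p \<le> K * m \<and> (\<forall>x<m. s (x + p) = s x)"
    using linearly_recurrent_prefix_return[OF assms(1)] by blast
  define Q where "Q = 1 + k * K"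
  have "int (N div Q - (k * k + k)) \<le> corr_measure (2 * k) s N" for N
  proof (cases "k \<le> N div Q")
    case True
    then have "1 \<le> N div Q" using assms(2) by simp
    then obtain p where p: "0 < p" "p \<le> K * (N div Q)" "\<forall>x<N div Q. s (x + p) = s x"
      using K by blast
    have "N div Q + k * p \<le> N div Q * Q"
      using p(2) unfolding Q_def by (simp add: algebra_simps)
    also have "\<dots> \<le> N" by simp
    finally show ?thesis
      using corr_measure_ge_periodic_prefix[OF p(3,1) assms(2) True] by blast
  next
    case False
    then show ?thesis using corr_measure_nonneg[of "2 * k" s N] by simp
  qed
  moreover have "1 \<le> Q" unfolding Q_def by simp
  ultimately show ?thesis using that by blast
qed

lemma half_quotient_le_nat_div_minus:
  fixes N Q :: nat and B :: real
  assumes "1 \<le> Q" and "2 * real Q * (1 + B) \<le> real N"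
  shows "real N / (2 * real Q) \<le> real (N div Q) - B"
proof -
  have "N < (N div Q + 1) * Q"
    using dividend_less_div_times[of Q N] assms(1) by simp
  then have "real N < real ((N div Q + 1) * Q)"
    by (simp only: of_nat_less_iff)
  then have "real N < real (N div Q) * real Q + real Q"
    by (simp add: algebra_simps)
  then have "real N \<le> (real (N div Q) - B) * (2 * real Q)"
    using assms(2) by (simp add: algebra_simps)
  then show ?thesis
    using assms(1) by (simp add: pos_divide_le_eq)
qed

theorem mainTheorem2:
  fixes s :: "nat \<Rightarrow> nat" and k :: nat
  assumes "\<forall>n. s n \<in> {0, 1}"
    and "linearly_recurrent s"
    and "k \<ge> 1"
  shows "\<exists>c::real. c > 0 \<and> (\<exists>N0. \<forall>N\<ge>N0. real_of_int (corr_measure (2 * k) s N) \<ge> c * real N)"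
proof -
  obtain Q :: nat where Q: "1 \<le> Q"
    and bound: "\<forall>N. int (N div Q - (k * k + k)) \<le> corr_measure (2 * k) s N"
    using linearly_recurrent_corr_measure_ge[OF assms(2,3)] by blast
  define B where "B = real (k * k + k)"
  have "real N / (2 * real Q) \<le> real_of_int (corr_measure (2 * k) s N)"
    if "2 * real Q * (1 + B) \<le> real N" for N
  proof -
    have "real N / (2 * real Q) \<le> real (N div Q) - B"
      using Q that by (rule half_quotient_le_nat_div_minus)
    also have "\<dots> \<le> real (N div Q - (k * k + k))"
      unfolding B_def by (cases "k * k + k \<le> N div Q") (simp_all flip: of_nat_mult of_nat_add)
    also have "\<dots> \<le> real_of_int (corr_measure (2 * k) s N)"
      using bound[rule_format, of N] by linarith
    finally show ?thesis .
  qed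
  moreover have "1 / (2 * real Q) > 0" using Q by simp
  ultimately show ?thesis
    by (intro exI[of _ "1 / (2 * real Q)"] conjI exI[of _ "nat \<lceil>2 * real Q * (1 + B)\<rceil>"]) auto
qed

end
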